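(* Let $\Omega\subset\mathbb{C}$ be a simply connected domain and let $(h,\mathcal{M},\mathcal{N})$ be a Weierstrass data of the second kind on $\Omega$. Define $g:=\frac{1}{h}$ and $\mathcal{P}:=\frac12\mathcal{N}$. Then there exists a $\mathcal{C}^2$ function $\mathcal{Q}:\Omega\to\mathbb{R}$ such that $$\mathcal{Q}_z=h\,\mathcal{M}_z-\frac{h^2}{2}\,\mathcal{N}_z .$$ Moreover, for any such $\mathcal{Q}$, the triple $(g,\mathcal{P},\mathcal{Q})$ is a Weierstrass data of the first kind on $\Omega$, and $$\frac{1}{\overline g}\left(\mathcal{P}_z-|g|^2\mathcal{Q}_z\right)=-\left(\mathcal{M}_z-(\mathrm{Re}\,h)\,\mathcal{N}_z\right).$$
   Context: $\Omega\subset\mathbb{R}^2\equiv\mathbb{C}$ has complex coordinate $z=u+iv$, and $\partial_z=\frac12(\partial_u-i\partial_v)$, $\partial_{\overline z}=\frac12(\partial_u+i\partial_v)$; subscripts denote partial derivatives. A Weierstrass data of the first kind on $\Omega$ is a triple $(g,\mathcal{P},\mathcal{Q})$ where $g:\Omega\to\mathbb{C}\setminus\{0\}$ and $\mathcal{P},\mathcal{Q}:\Omega\to\mathbb{R}$ are $\mathcal{C}^2$, satisfying $g_{\overline z}=0$, $\mathcal{P}_{z\overline z}=|g|^2\mathcal{Q}_{z\overline z}$, and $\mathcal{P}_z-|g|^2\mathcal{Q}_z\neq0$ at every point of $\Omega$. A Weierstrass data of the second kind on $\Omega$ is a triple $(h,\mathcal{M},\mathcal{N})$ where $h:\Omega\to\mathbb{C}\setminus\{0\}$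 and $\mathcal{M},\mathcal{N}:\Omega\to\mathbb{R}$ are $\mathcal{C}^2$, satisfying $h_{\overline z}=0$, $\mathcal{M}_{z\overline z}=(\mathrm{Re}\,h)\,\mathcal{N}_{z\overline z}$, and $\mathcal{M}_z-(\mathrm{Re}\,h)\,\mathcal{N}_z\neq0$ at every point of $\Omega$. *)

theory Defs
  imports "HOL-Analysis.Analysis"
begin

text \<open>Coordinates z = u + i v. Partial derivatives in u and v of a function on
  the plane (values in any real normed vector space), via the Frechet derivative.\<close>

definition pu :: "(complex \<Rightarrow> 'a::real_normed_vector) \<Rightarrow> complex \<Rightarrow> 'a" where
  "pu f z = frechet_derivative f (at z) 1"

definition pv :: "(complex \<Rightarrow> 'a::real_normed_vector) \<Rightarrow> complex \<Rightarrow> 'a" where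
  "pv f z = frechet_derivative f (at z) \<i>"

definition C1_on :: "complex set \<Rightarrow> (complex \<Rightarrow> 'a::real_normed_vector) \<Rightarrow> bool" where
  "C1_on \<Omega> f \<longleftrightarrow> (\<forall>z\<in>\<Omega>. f differentiable (at z))
      \<and> continuous_on \<Omega> (pu f) \<and> continuous_on \<Omega> (pv f)"

definition C2_on :: "complex set \<Rightarrow> (complex \<Rightarrow> 'a::real_normed_vector) \<Rightarrow> bool" where
  "C2_on \<Omega> f \<longleftrightarrow> C1_on \<Omega> f \<and> C1_on \<Omega> (pu f) \<and> C1_on \<Omega> (pv f)"

definition dz :: "(complex \<Rightarrow> complex) \<Rightarrow> complex \<Rightarrow> complex" where
  "dz f z = (pu f z - \<i> * pv f z) / 2"

definition dzbar :: "(complex \<Rightarrow> complex) \<Rightarrow> complex \<Rightarrow> complex" where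
  "dzbar f z = (pu f z + \<i> * pv f z) / 2"

definition cR :: "(complex \<Rightarrow> real) \<Rightarrow> complex \<Rightarrow> complex" where
  "cR f = (\<lambda>z. complex_of_real (f z))"

definition WD1 :: "complex set \<Rightarrow> (complex \<Rightarrow> complex) \<Rightarrow> (complex \<Rightarrow> real) \<Rightarrow> (complex \<Rightarrow> real) \<Rightarrow> bool" where
  "WD1 \<Omega> g P Q \<longleftrightarrow>
     C2_on \<Omega> g \<and> C2_on \<Omega> P \<and> C2_on \<Omega> Q \<and>
     (\<forall>z\<in>\<Omega>. g z \<noteq> 0) \<and>
     (\<forall>z\<in>\<Omega>. dzbar g z = 0) \<and>
     (\<forall>z\<in>\<Omega>. dz (dzbar (cR P)) z = complex_of_real ((cmod (g z))\<^sup>2) * dz (dzbar (cR Q)) z) \<and>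
     (\<forall>z\<in>\<Omega>. dz (cR P) z - complex_of_real ((cmod (g z))\<^sup>2) * dz (cR Q) z \<noteq> 0)"

definition WD2 :: "complex set \<Rightarrow> (complex \<Rightarrow> complex) \<Rightarrow> (complex \<Rightarrow> real) \<Rightarrow> (complex \<Rightarrow> real) \<Rightarrow> bool" where
  "WD2 \<Omega> h M N \<longleftrightarrow>
     C2_on \<Omega> h \<and> C2_on \<Omega> M \<and> C2_on \<Omega> N \<and>
     (\<forall>z\<in>\<Omega>. h z \<noteq> 0) \<and>
     (\<forall>z\<in>\<Omega>. dzbar h z = 0) \<and>
     (\<forall>z\<in>\<Omega>. dz (dzbar (cR M)) z = complex_of_real (Re (h z)) * dz (dzbar (cR N)) z) \<and>
     (\<forall>z\<in>\<Omega>. dz (cR M) z - complex_of_real (Re (h z)) * dz (cR N) z \<noteq> 0)"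

end

theory Submission
  imports Defs "HOL-Complex_Analysis.Complex_Analysis"
begin

text \<open>As \<open>h\<close> is holomorphic, \<open>F = h M\<^sub>z - (h\<^sup>2/2) N\<^sub>z\<close> has
  \<open>dzbar F = h dzbar M\<^sub>z - (h\<^sup>2/2) dzbar N\<^sub>z = (h Re h - h\<^sup>2/2) \<Delta>N/4 = |h|\<^sup>2 \<Delta>N/8\<close>,
  by the symmetry of second derivatives and \<open>\<Delta>M = (Re h) \<Delta>N\<close>. So \<open>dzbar F\<close> is real,
  i.e. the real 1-form \<open>Re (F dz)\<close> is closed, and on a simply connected domain it has a
  primitive: a real \<open>Q\<close> with \<open>dQ = 2 Re (F dz)\<close>, i.e. \<open>Q\<^sub>z = F\<close>. It is obtained by radial
  integration on the disc (or the plane) and transported along a Riemann map. For any such \<open>Q\<close>,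
  \<open>dz dzbar Q = cnj (dzbar F) = |h|\<^sup>2 \<Delta>N/8 = |h|\<^sup>2 dz dzbar P\<close> with \<open>P = N/2\<close> and
  \<open>|g| = 1/|h|\<close>, and the final identity is algebra based on \<open>2 Re h = h + cnj h\<close>.\<close>

section \<open>Real differentials and Wirtinger calculus\<close>

definition lin_uv :: "'a::real_normed_vector \<Rightarrow> 'a \<Rightarrow> complex \<Rightarrow> 'a" where
  "lin_uv a b = (\<lambda>k. Re k *\<^sub>R a + Im k *\<^sub>R b)"

lemma lin_uv_1 [simp]: "lin_uv a b 1 = a"
  and lin_uv_i [simp]: "lin_uv a b \<i> = b"
  by (simp_all add: lin_uv_def)

lemma lin_uv_of_real_mult: "lin_uv a b (of_real s * k) = s *\<^sub>R lin_uv a b k"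
  by (simp add: lin_uv_def algebra_simps)

lemma has_derivative_eq_lin_uv:
  assumes "(f has_derivative D) (at z)"
  shows "D = lin_uv (pu f z) (pv f z)"
proof
  fix k :: complex
  have frechet: "D = frechet_derivative f (at z)"
    using assms frechet_derivative_at by blast
  have "k = Re k *\<^sub>R 1 + Im k *\<^sub>R \<i>"
    by (simp add: complex_eq_iff)
  then have "D k = D (Re k *\<^sub>R 1 + Im k *\<^sub>R \<i>)"
    by simp
  also have "\<dots> = Re k *\<^sub>R D 1 + Im k *\<^sub>R D \<i>"
    using has_derivative_linear[OF assms] by (simp add: linear_add linear_scale)
  finally show "D k = lin_uv (pu f z) (pv f z) k"
    by (simp add: lin_uv_def pu_def pv_def frechet)
qed

lemma pu_pv_eqI:
  assumes "(f has_derivative lin_uv a b) (at z)"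
  shows "pu f z = a" "pv f z = b"
  using has_derivative_eq_lin_uv[OF assms] by (metis lin_uv_1 lin_uv_i)+

lemma differentiable_has_derivative_lin_uv:
  "f differentiable (at z) \<Longrightarrow> (f has_derivative lin_uv (pu f z) (pv f z)) (at z)"
  using has_derivative_eq_lin_uv unfolding differentiable_def by blast

lemma pu_pv_cong:
  assumes "open S" "z \<in> S" "\<And>w. w \<in> S \<Longrightarrow> f w = g w"
  shows "pu f z = pu g z" "pv f z = pv g z"
proof -
  have "(f has_derivative D) (at z) \<longleftrightarrow> (g has_derivative D) (at z)" for D
  proof
    show "(g has_derivative D) (at z)" if "(f has_derivative D) (at z)"
      by (rule has_derivative_transform_within_open[OF that assms(1,2)]) (simp add: assms(3))
    show "(f has_derivative D) (at z)" if "(g has_derivative D) (at z)"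
      by (rule has_derivative_transform_within_open[OF that assms(1,2)]) (simp add: assms(3))
  qed
  then show "pu f z = pu g z" "pv f z = pv g z"
    by (simp_all add: pu_def pv_def frechet_derivative_def)
qed

lemma has_derivative_lin_uv_bounded_linear:
  assumes "bounded_linear L" "(f has_derivative lin_uv a b) (at z)"
  shows "((\<lambda>w. L (f w)) has_derivative lin_uv (L a) (L b)) (at z)"
proof -
  have "(\<lambda>k. L (lin_uv a b k)) = lin_uv (L a) (L b)"
    using assms(1) by (simp add: lin_uv_def linear_add linear_scale bounded_linear.linear)
  then show ?thesis
    using bounded_linear.has_derivative[OF assms] by simp
qed

lemma has_derivative_lin_uv_add:
  assumes "(f has_derivative lin_uv a b) (at z)" "(g has_derivative lin_uv c d) (at z)"
  shows "((\<lambda>w. f w + g w) has_derivative lin_uv (a + c) (b + d)) (at z)"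
  using has_derivative_add[OF assms] by (simp add: lin_uv_def algebra_simps)

lemma has_derivative_lin_uv_diff:
  assumes "(f has_derivative lin_uv a b) (at z)" "(g has_derivative lin_uv c d) (at z)"
  shows "((\<lambda>w. f w - g w) has_derivative lin_uv (a - c) (b - d)) (at z)"
  using has_derivative_diff[OF assms] by (simp add: lin_uv_def algebra_simps)

lemma has_derivative_lin_uv_mult:
  fixes f g :: "complex \<Rightarrow> 'a::real_normed_algebra"
  assumes "(f has_derivative lin_uv a b) (at z)" "(g has_derivative lin_uv c d) (at z)"
  shows "((\<lambda>w. f w * g w) has_derivative lin_uv (f z * c + a * g z) (f z * d + b * g z)) (at z)"
  using has_derivative_mult[OF assms] by (simp add: lin_uv_def algebra_simps)

lemma has_field_derivative_iff_lin_uv: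
  "(f has_field_derivative c) (at z) \<longleftrightarrow> (f has_derivative lin_uv c (\<i> * c)) (at z)"
proof -
  have "lin_uv c (\<i> * c) = (*) c"
  proof
    fix k :: complex
    have "k = of_real (Re k) + \<i> * of_real (Im k)"
      by (simp add: complex_eq_iff)
    then have "c * k = c * (of_real (Re k) + \<i> * of_real (Im k))"
      by simp
    then show "lin_uv c (\<i> * c) k = c * k"
      by (simp add: lin_uv_def scaleR_conv_of_real algebra_simps)
  qed
  then show ?thesis by (simp add: has_field_derivative_def)
qed

lemma lin_uv_lin_uv:
  "lin_uv a b (lin_uv c d k) = lin_uv (lin_uv a b c) (lin_uv a b d) k"
  by (simp add: lin_uv_def algebra_simps)

lemma has_derivative_lin_uv_compose_holomorphic:
  assumes "(\<phi> has_field_derivative c) (at w)" "(F has_derivative lin_uv a b) (at (\<phi> w))"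
  shows "((\<lambda>w. F (\<phi> w)) has_derivative lin_uv (lin_uv a b c) (lin_uv a b (\<i> * c))) (at w)"
  using has_derivative_compose[OF assms(1)[unfolded has_field_derivative_iff_lin_uv] assms(2)]
  by (simp add: lin_uv_lin_uv)

lemma lin_uv_add_i_lin_uv: "lin_uv a b c + \<i> * lin_uv a b (\<i> * c) = cnj c * (a + \<i> * b)"
  by (simp add: lin_uv_def complex_eq_iff algebra_simps)

lemma pu_pv_bounded_linear:
  assumes "bounded_linear L" "f differentiable (at z)"
  shows "pu (\<lambda>w. L (f w)) z = L (pu f z)" "pv (\<lambda>w. L (f w)) z = L (pv f z)"
  using pu_pv_eqI[OF has_derivative_lin_uv_bounded_linear[OF assms(1)
        differentiable_has_derivative_lin_uv[OF assms(2)]]] by simp_all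

lemma pu_pv_cR:
  assumes "f differentiable (at z)"
  shows "pu (cR f) z = of_real (pu f z)" "pv (cR f) z = of_real (pv f z)"
  using pu_pv_bounded_linear[OF bounded_linear_of_real assms] by (simp_all add: cR_def)

lemma dzbar_cR:
  assumes "f differentiable (at z)"
  shows "dzbar (cR f) z = cnj (dz (cR f) z)"
  by (simp add: dz_def dzbar_def pu_pv_cR[OF assms])

lemma dz_dzbar_divide:
  assumes "f differentiable (at z)"
  shows "dz (\<lambda>w. f w / c) z = dz f z / c" "dzbar (\<lambda>w. f w / c) z = dzbar f z / c"
  using pu_pv_bounded_linear[OF bounded_linear_divide assms]
  by (simp_all add: dz_def dzbar_def diff_divide_distrib add_divide_distrib mult.commute)

lemma dz_cnj:
  assumes "f differentiable (at z)"
  shows "dz (\<lambda>w. cnj (f w)) z = cnj (dzbar f z)"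
  by (simp add: dz_def dzbar_def pu_pv_bounded_linear[OF bounded_linear_cnj assms])

lemma dzbar_diff:
  assumes "f differentiable (at z)" "g differentiable (at z)"
  shows "dzbar (\<lambda>w. f w - g w) z = dzbar f z - dzbar g z"
proof -
  note d = pu_pv_eqI[OF has_derivative_lin_uv_diff[OF assms[THEN differentiable_has_derivative_lin_uv]]]
  show ?thesis
    unfolding dzbar_def d by (simp add: algebra_simps diff_divide_distrib)
qed

lemma pu_pv_holomorphic:
  assumes "f holomorphic_on S" "open S" "z \<in> S"
  shows "pu f z = deriv f z" "pv f z = \<i> * deriv f z"
  using pu_pv_eqI[OF has_field_derivative_iff_lin_uv[THEN iffD1, OF holomorphic_derivI[OF assms]]] .

lemma dzbar_holomorphic:
  assumes "f holomorphic_on S" "open S" "z \<in> S"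
  shows "dzbar f z = 0"
  by (simp add: dzbar_def pu_pv_holomorphic[OF assms])

lemma holomorphic_onI_dzbar:
  assumes "open S" "\<And>z. z \<in> S \<Longrightarrow> f differentiable (at z)" "\<And>z. z \<in> S \<Longrightarrow> dzbar f z = 0"
  shows "f holomorphic_on S"
proof -
  have "(f has_field_derivative pu f z) (at z)" if "z \<in> S" for z
  proof -
    have "pu f z + \<i> * pv f z = 0"
      using assms(3)[OF that] by (simp add: dzbar_def)
    then have "pv f z = \<i> * pu f z"
      by (simp add: complex_eq_iff)
    then show ?thesis
      using differentiable_has_derivative_lin_uv[OF assms(2)[OF that]] has_field_derivative_iff_lin_uv
      by simp
  qed
  then show ?thesis
    using holomorphic_on_open[OF assms(1)] by blast
qed

lemma dzbar_holomorphic_mult: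
  assumes "h holomorphic_on S" "open S" "z \<in> S" "G differentiable (at z)"
  shows "dzbar (\<lambda>w. h w * G w) z = h z * dzbar G z"
proof -
  have "(h has_derivative lin_uv (deriv h z) (\<i> * deriv h z)) (at z)"
    using holomorphic_derivI[OF assms(1-3)] has_field_derivative_iff_lin_uv by blast
  from pu_pv_eqI[OF has_derivative_lin_uv_mult[OF this differentiable_has_derivative_lin_uv[OF assms(4)]]]
  show ?thesis
    by (simp add: dzbar_def algebra_simps)
qed

lemma C1_onI:
  assumes "open S" "\<And>z. z \<in> S \<Longrightarrow> (f has_derivative lin_uv (a z) (b z)) (at z)"
    and "continuous_on S a" "continuous_on S b"
  shows "C1_on S f"
proof -
  have "continuous_on S (pu f)" "continuous_on S (pv f)"
    using assms(3,4) pu_pv_eqI[OF assms(2)] continuous_on_cong by force+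
  then show ?thesis
    using assms(2) unfolding C1_on_def differentiable_def by blast
qed

lemma C1_on_differentiable: "C1_on S f \<Longrightarrow> z \<in> S \<Longrightarrow> f differentiable (at z)"
  unfolding C1_on_def by blast

lemma C1_on_imp_continuous_on: "C1_on S f \<Longrightarrow> continuous_on S f"
  unfolding C1_on_def
  by (intro continuous_at_imp_continuous_on ballI differentiable_imp_continuous_within) auto

lemma C1_on_has_derivative:
  "C1_on S f \<Longrightarrow> z \<in> S \<Longrightarrow> (f has_derivative lin_uv (pu f z) (pv f z)) (at z)"
  by (rule differentiable_has_derivative_lin_uv[OF C1_on_differentiable])

lemma C1_on_cong:
  assumes "open S" "C1_on S f" "\<And>w. w \<in> S \<Longrightarrow> f w = g w"
  shows "C1_on S g"
proof (rule C1_onI[OF assms(1)])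
  show "(g has_derivative lin_uv (pu f z) (pv f z)) (at z)" if "z \<in> S" for z
    using has_derivative_transform_within_open[OF C1_on_has_derivative[OF assms(2) that] assms(1) that]
      assms(3) by blast
  show "continuous_on S (pu f)" "continuous_on S (pv f)"
    using assms(2) unfolding C1_on_def by auto
qed

lemma C1_on_bounded_linear:
  assumes "bounded_linear L" "open S" "C1_on S f"
  shows "C1_on S (\<lambda>w. L (f w))"
proof (rule C1_onI[OF assms(2)])
  show "((\<lambda>w. L (f w)) has_derivative lin_uv (L (pu f z)) (L (pv f z))) (at z)" if "z \<in> S" for z
    by (rule has_derivative_lin_uv_bounded_linear[OF assms(1) C1_on_has_derivative[OF assms(3) that]])
  show "continuous_on S (\<lambda>z. L (pu f z))" "continuous_on S (\<lambda>z. L (pv f z))"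
    using assms(3) bounded_linear.continuous_on[OF assms(1)] unfolding C1_on_def by auto
qed

lemma C1_on_diff:
  assumes "open S" "C1_on S f" "C1_on S g"
  shows "C1_on S (\<lambda>w. f w - g w)"
proof (rule C1_onI[OF assms(1)])
  show "((\<lambda>w. f w - g w) has_derivative lin_uv (pu f z - pu g z) (pv f z - pv g z)) (at z)"
    if "z \<in> S" for z
    by (rule has_derivative_lin_uv_diff[OF assms(2,3)[THEN C1_on_has_derivative, OF that]])
  show "continuous_on S (\<lambda>z. pu f z - pu g z)" "continuous_on S (\<lambda>z. pv f z - pv g z)"
    using assms(2,3) unfolding C1_on_def by (auto intro!: continuous_intros)
qed

lemma C1_on_mult:
  fixes f g :: "complex \<Rightarrow> 'a::real_normed_algebra"
  assumes "open S" "C1_on S f" "C1_on S g"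
  shows "C1_on S (\<lambda>w. f w * g w)"
proof (rule C1_onI[OF assms(1)])
  show "((\<lambda>w. f w * g w) has_derivative
      lin_uv (f z * pu g z + pu f z * g z) (f z * pv g z + pv f z * g z)) (at z)" if "z \<in> S" for z
    by (rule has_derivative_lin_uv_mult[OF assms(2,3)[THEN C1_on_has_derivative, OF that]])
  have "continuous_on S f" "continuous_on S g"
    using assms(2,3) by (simp_all add: C1_on_imp_continuous_on)
  then show "continuous_on S (\<lambda>z. f z * pu g z + pu f z * g z)"
    "continuous_on S (\<lambda>z. f z * pv g z + pv f z * g z)"
    using assms(2,3) unfolding C1_on_def by (auto intro!: continuous_intros)
qed

lemma C2_on_bounded_linear:
  assumes "bounded_linear L" "open S" "C2_on S f"
  shows "C2_on S (\<lambda>w. L (f w))"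
proof -
  have f: "C1_on S f" "C1_on S (pu f)" "C1_on S (pv f)"
    using assms(3) unfolding C2_on_def by auto
  have "C1_on S (pu (\<lambda>w. L (f w)))" "C1_on S (pv (\<lambda>w. L (f w)))"
    using C1_on_cong[OF assms(2) C1_on_bounded_linear[OF assms(1,2) f(2)]]
      C1_on_cong[OF assms(2) C1_on_bounded_linear[OF assms(1,2) f(3)]]
      pu_pv_bounded_linear[OF assms(1) C1_on_differentiable[OF f(1)]] by simp_all
  then show ?thesis
    using C1_on_bounded_linear[OF assms(1,2) f(1)] unfolding C2_on_def by blast
qed

lemma C1_on_dz_dzbar:
  fixes f :: "complex \<Rightarrow> complex"
  assumes "open S" "C2_on S f"
  shows "C1_on S (dz f)" "C1_on S (dzbar f)"
proof -
  have f: "C1_on S (pu f)" "C1_on S (\<lambda>z. \<i> * pv f z)"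
    using assms C1_on_bounded_linear[OF bounded_linear_mult_right] unfolding C2_on_def by auto
  have "dz f = (\<lambda>z. (pu f z - \<i> * pv f z) / 2)" "dzbar f = (\<lambda>z. (pu f z + \<i> * pv f z) / 2)"
    by (simp_all add: dz_def dzbar_def fun_eq_iff)
  then show "C1_on S (dz f)" "C1_on S (dzbar f)"
    using C1_on_bounded_linear[OF bounded_linear_divide assms(1)] C1_on_diff[OF assms(1) f]
      C1_on_diff[OF assms(1) f(1) C1_on_bounded_linear[OF bounded_linear_minus[OF bounded_linear_ident] assms(1) f(2)]]
    by simp_all
qed

lemma dz_dzbar_cong:
  assumes "open S" "z \<in> S" "\<And>w. w \<in> S \<Longrightarrow> f w = g w"
  shows "dz f z = dz g z" "dzbar f z = dzbar g z"
  using pu_pv_cong[OF assms] by (simp_all add: dz_def dzbar_def)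

lemma C2_on_cR: "open S \<Longrightarrow> C2_on S f \<Longrightarrow> C2_on S (cR f)"
  unfolding cR_def by (rule C2_on_bounded_linear[OF bounded_linear_of_real])

lemma cR_half: "cR (\<lambda>w. f w / 2) = (\<lambda>w. cR f w / 2)"
  by (simp add: cR_def fun_eq_iff)

lemma holomorphic_on_imp_C1_on:
  assumes "f holomorphic_on S" "open S"
  shows "C1_on S f"
proof (rule C1_onI[OF assms(2)])
  show "(f has_derivative lin_uv (deriv f z) (\<i> * deriv f z)) (at z)" if "z \<in> S" for z
    using holomorphic_derivI[OF assms that] has_field_derivative_iff_lin_uv by blast
  show "continuous_on S (deriv f)" "continuous_on S (\<lambda>z. \<i> * deriv f z)"
    using holomorphic_deriv[OF assms] holomorphic_on_imp_continuous_on
    by (auto intro!: continuous_intros)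
qed

lemma holomorphic_on_imp_C2_on:
  assumes "f holomorphic_on S" "open S"
  shows "C2_on S f"
proof -
  have "C1_on S (deriv f)"
    using holomorphic_on_imp_C1_on[OF holomorphic_deriv[OF assms] assms(2)] .
  then have "C1_on S (pu f)" "C1_on S (pv f)"
    using C1_on_cong[OF assms(2)] C1_on_bounded_linear[OF bounded_linear_mult_right assms(2)]
      pu_pv_holomorphic[OF assms] by metis+
  then show ?thesis
    using holomorphic_on_imp_C1_on[OF assms] unfolding C2_on_def by blast
qed

section \<open>Symmetry of second derivatives\<close>

lemma double_difference_mvt:
  fixes \<phi> \<phi>1 \<phi>12 :: "real \<Rightarrow> real \<Rightarrow> real"
  assumes "0 < \<delta>"
    and d1: "\<And>s t. s \<in> {0..\<delta>} \<Longrightarrow> t \<in> {0..\<delta>} \<Longrightarrow> ((\<lambda>s. \<phi> s t) has_real_derivative \<phi>1 s t) (at s)"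
    and d12: "\<And>s t. s \<in> {0..\<delta>} \<Longrightarrow> t \<in> {0..\<delta>} \<Longrightarrow> ((\<lambda>t. \<phi>1 s t) has_real_derivative \<phi>12 s t) (at t)"
  obtains \<sigma> \<tau> where "\<sigma> \<in> {0..\<delta>}" "\<tau> \<in> {0..\<delta>}"
    "\<phi> \<delta> \<delta> - \<phi> \<delta> 0 - \<phi> 0 \<delta> + \<phi> 0 0 = \<delta> * \<delta> * \<phi>12 \<sigma> \<tau>"
proof -
  obtain \<sigma> where \<sigma>: "0 < \<sigma>" "\<sigma> < \<delta>"
    and \<Delta>: "(\<phi> \<delta> \<delta> - \<phi> \<delta> 0) - (\<phi> 0 \<delta> - \<phi> 0 0) = (\<delta> - 0) * (\<phi>1 \<sigma> \<delta> - \<phi>1 \<sigma> 0)"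
    using MVT2[OF assms(1), of "\<lambda>s. \<phi> s \<delta> - \<phi> s 0" "\<lambda>s. \<phi>1 s \<delta> - \<phi>1 s 0"]
      DERIV_diff[OF d1 d1] assms(1) by force
  obtain \<tau> where "0 < \<tau>" "\<tau> < \<delta>" "\<phi>1 \<sigma> \<delta> - \<phi>1 \<sigma> 0 = (\<delta> - 0) * \<phi>12 \<sigma> \<tau>"
    using MVT2[OF assms(1), of "\<phi>1 \<sigma>" "\<phi>12 \<sigma>"] d12 \<sigma> by force
  with \<sigma> \<Delta> show ?thesis
    by (intro that[of \<sigma> \<tau>]) (simp_all add: algebra_simps)
qed

lemma has_real_derivative_along_line:
  fixes f :: "complex \<Rightarrow> real"
  assumes "(f has_derivative lin_uv a b) (at (c + of_real s * d))"
  shows "((\<lambda>s. f (c + of_real s * d)) has_real_derivative lin_uv a b d) (at s)"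
proof -
  have "((\<lambda>s::real. c + of_real s * d) has_derivative (\<lambda>x. of_real x * d)) (at s)"
    by (auto intro!: derivative_eq_intros)
  from has_derivative_compose[OF this assms]
  have "((\<lambda>s. f (c + of_real s * d)) has_derivative (\<lambda>x. lin_uv a b (of_real x * d))) (at s)" .
  moreover have "(\<lambda>x. lin_uv a b (of_real x * d)) = (*) (lin_uv a b d)"
    by (simp add: fun_eq_iff lin_uv_def algebra_simps)
  ultimately show ?thesis
    by (simp add: has_field_derivative_def)
qed

lemma has_real_derivative_partials:
  fixes f :: "complex \<Rightarrow> real"
  assumes "(f has_derivative lin_uv a b) (at (z + of_real s + \<i> * of_real t))"
  shows "((\<lambda>s. f (z + of_real s + \<i> * of_real t)) has_real_derivative a) (at s)"
    and "((\<lambda>t. f (z + of_real s + \<i> * of_real t)) has_real_derivative b) (at t)"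
  using has_real_derivative_along_line[of f a b "z + \<i> * of_real t" s 1]
    has_real_derivative_along_line[of f a b "z + of_real s" t \<i>] assms
  by (simp_all add: algebra_simps)

text \<open>By the mean value theorem applied twice, in either order, the double difference of \<open>f\<close>
  over a small square is \<open>\<delta>\<^sup>2\<close> times either mixed partial at some point of the square.\<close>

lemma mixed_partials_meet:
  fixes f :: "complex \<Rightarrow> real"
  assumes f: "C2_on S f" and "0 < r" and ball: "ball z r \<subseteq> S"
  obtains w1 w2 where "w1 \<in> ball z r" "w2 \<in> ball z r" "pv (pu f) w1 = pu (pv f) w2"
proof -
  have C1: "C1_on S f" "C1_on S (pu f)" "C1_on S (pv f)"
    using f unfolding C2_on_def by auto
  define \<delta> where "\<delta> = r / 3"
  have "\<delta> > 0"
    using \<open>0 < r\<close> by (simp add: \<delta>_def)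
  have square: "z + of_real s + \<i> * of_real t \<in> ball z r" if "s \<in> {0..\<delta>}" "t \<in> {0..\<delta>}" for s t
  proof -
    have "cmod (of_real s + \<i> * of_real t) \<le> \<bar>s\<bar> + \<bar>t\<bar>"
      using cmod_le[of "of_real s + \<i> * of_real t"] by simp
    also have "\<dots> < r"
      using that \<open>0 < r\<close> by (simp add: \<delta>_def)
    finally have "dist (z + of_real s + \<i> * of_real t) z < r"
      by (simp add: dist_norm)
    then show ?thesis
      by (simp add: dist_commute)
  qed
  define \<phi> where "\<phi> s t = f (z + of_real s + \<i> * of_real t)" for s t
  obtain \<sigma>1 \<tau>1 where w1: "\<sigma>1 \<in> {0..\<delta>}" "\<tau>1 \<in> {0..\<delta>}"
    and \<Delta>1: "\<phi> \<delta> \<delta> - \<phi> \<delta> 0 - \<phi> 0 \<delta> + \<phi> 0 0 = \<delta> * \<delta> * pv (pu f) (z + of_real \<sigma>1 + \<i> * of_real \<tau>1)"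
  proof (rule double_difference_mvt[OF \<open>\<delta> > 0\<close>])
    fix s t assume "s \<in> {0..\<delta>}" "t \<in> {0..\<delta>}"
    with square ball have w: "z + of_real s + \<i> * of_real t \<in> S" by blast
    show "((\<lambda>s. \<phi> s t) has_real_derivative pu f (z + of_real s + \<i> * of_real t)) (at s)"
      unfolding \<phi>_def by (rule has_real_derivative_partials(1)[OF C1_on_has_derivative[OF C1(1) w]])
    show "((\<lambda>t. pu f (z + of_real s + \<i> * of_real t)) has_real_derivative
        pv (pu f) (z + of_real s + \<i> * of_real t)) (at t)"
      by (rule has_real_derivative_partials(2)[OF C1_on_has_derivative[OF C1(2) w]])
  qed
  obtain \<tau>2 \<sigma>2 where w2: "\<tau>2 \<in> {0..\<delta>}" "\<sigma>2 \<in> {0..\<delta>}"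
    and \<Delta>2: "\<phi> \<delta> \<delta> - \<phi> 0 \<delta> - \<phi> \<delta> 0 + \<phi> 0 0 = \<delta> * \<delta> * pu (pv f) (z + of_real \<sigma>2 + \<i> * of_real \<tau>2)"
  proof (rule double_difference_mvt[OF \<open>\<delta> > 0\<close>, where \<phi> = "\<lambda>t s. \<phi> s t"])
    fix t s assume "t \<in> {0..\<delta>}" "s \<in> {0..\<delta>}"
    with square ball have w: "z + of_real s + \<i> * of_real t \<in> S" by blast
    show "((\<lambda>t. \<phi> s t) has_real_derivative pv f (z + of_real s + \<i> * of_real t)) (at t)"
      unfolding \<phi>_def by (rule has_real_derivative_partials(2)[OF C1_on_has_derivative[OF C1(1) w]])
    show "((\<lambda>s. pv f (z + of_real s + \<i> * of_real t)) has_real_derivative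
        pu (pv f) (z + of_real s + \<i> * of_real t)) (at s)"
      by (rule has_real_derivative_partials(1)[OF C1_on_has_derivative[OF C1(3) w]])
  qed
  have "\<delta> * \<delta> * pv (pu f) (z + of_real \<sigma>1 + \<i> * of_real \<tau>1)
      = \<delta> * \<delta> * pu (pv f) (z + of_real \<sigma>2 + \<i> * of_real \<tau>2)"
    using \<Delta>1 \<Delta>2 by linarith
  with \<open>\<delta> > 0\<close> square[OF w1] square[OF w2(2,1)] show ?thesis
    by (intro that) simp_all
qed

lemma pv_pu_eq_pu_pv:
  fixes f :: "complex \<Rightarrow> real"
  assumes S: "open S" and f: "C2_on S f" and z: "z \<in> S"
  shows "pv (pu f) z = pu (pv f) z"
proof -
  have cont: "continuous_on S (pv (pu f))" "continuous_on S (pu (pv f))"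
    using f unfolding C2_on_def C1_on_def by blast+
  have "\<bar>pv (pu f) z - pu (pv f) z\<bar> < 2 * e" if "e > 0" for e
  proof -
    obtain d1 where "d1 > 0" and d1: "\<And>w. w \<in> S \<Longrightarrow> dist w z < d1 \<Longrightarrow> dist (pv (pu f) w) (pv (pu f) z) < e"
      using cont(1) z \<open>e > 0\<close> unfolding continuous_on_iff by blast
    obtain d2 where "d2 > 0" and d2: "\<And>w. w \<in> S \<Longrightarrow> dist w z < d2 \<Longrightarrow> dist (pu (pv f) w) (pu (pv f) z) < e"
      using cont(2) z \<open>e > 0\<close> unfolding continuous_on_iff by blast
    obtain d3 where "d3 > 0" "ball z d3 \<subseteq> S"
      using S z open_contains_ball by blast
    then have "ball z (min d1 (min d2 d3)) \<subseteq> S"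
      by auto
    with \<open>d1 > 0\<close> \<open>d2 > 0\<close> \<open>d3 > 0\<close>
    obtain w1 w2 where w: "w1 \<in> ball z (min d1 (min d2 d3))" "w2 \<in> ball z (min d1 (min d2 d3))"
      and "pv (pu f) w1 = pu (pv f) w2"
      using mixed_partials_meet[OF f] by (metis min_less_iff_conj)
    moreover have "w1 \<in> S" "w2 \<in> S"
      using w \<open>ball z d3 \<subseteq> S\<close> by auto
    then have "dist (pv (pu f) w1) (pv (pu f) z) < e" "dist (pu (pv f) w2) (pu (pv f) z) < e"
      using d1 d2 w by (simp_all add: dist_commute)
    ultimately show ?thesis
      by (simp add: dist_real_def)
  qed
  from this[of "\<bar>pv (pu f) z - pu (pv f) z\<bar> / 2"] show ?thesis
    by fastforce
qed

lemma dz_dzbar_cR: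
  fixes f :: "complex \<Rightarrow> real"
  assumes S: "open S" and f: "C2_on S f" and z: "z \<in> S"
  shows "dz (dzbar (cR f)) z = of_real ((pu (pu f) z + pv (pv f) z) / 4)"
    and "dzbar (dz (cR f)) z = of_real ((pu (pu f) z + pv (pv f) z) / 4)"
proof -
  have C1: "C1_on S f" "C1_on S (pu f)" "C1_on S (pv f)"
    using f unfolding C2_on_def by auto
  define G where "G c w = (of_real (pu f w) + c * of_real (pv f w)) / 2" for c :: complex and w
  have cR_partial: "((\<lambda>w. of_real (g w) :: complex) has_derivative
      lin_uv (of_real (pu g z)) (of_real (pv g z))) (at z)" if "C1_on S g" for g
    using has_derivative_lin_uv_bounded_linear[OF bounded_linear_of_real C1_on_has_derivative[OF that z]] .
  have "(G c has_derivative lin_uv ((of_real (pu (pu f) z) + c * of_real (pu (pv f) z)) / 2)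
      ((of_real (pv (pu f) z) + c * of_real (pv (pv f) z)) / 2)) (at z)" for c
    using has_derivative_lin_uv_bounded_linear[OF bounded_linear_divide
          has_derivative_lin_uv_add[OF cR_partial[OF C1(2)]
            has_derivative_lin_uv_bounded_linear[OF bounded_linear_mult_right cR_partial[OF C1(3)]]]]
    unfolding G_def by simp
  note G_partials = pu_pv_eqI[OF this]
  have "dzbar (cR f) w = G \<i> w" "dz (cR f) w = G (- \<i>) w" if "w \<in> S" for w
    using pu_pv_cR[OF C1_on_differentiable[OF C1(1) that]] by (simp_all add: G_def dz_def dzbar_def)
  then have "pu (dzbar (cR f)) z = pu (G \<i>) z" "pv (dzbar (cR f)) z = pv (G \<i>) z"
    "pu (dz (cR f)) z = pu (G (- \<i>)) z" "pv (dz (cR f)) z = pv (G (- \<i>)) z"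
    using pu_pv_cong[OF S z] by blast+
  then show "dz (dzbar (cR f)) z = of_real ((pu (pu f) z + pv (pv f) z) / 4)"
    "dzbar (dz (cR f)) z = of_real ((pu (pu f) z + pv (pv f) z) / 4)"
    using pv_pu_eq_pu_pv[OF S f z] by (simp_all add: dz_def dzbar_def G_partials complex_eq_iff)
qed

lemma dz_dzbar_cR_half:
  fixes f :: "complex \<Rightarrow> real"
  assumes S: "open S" and f: "C2_on S f" and z: "z \<in> S"
  shows "dz (cR (\<lambda>w. f w / 2)) z = dz (cR f) z / 2"
    and "dz (dzbar (cR (\<lambda>w. f w / 2))) z = dz (dzbar (cR f)) z / 2"
proof -
  have C1: "C1_on S (cR f)" "C1_on S (dzbar (cR f))"
    using C2_on_cR[OF S f] C1_on_dz_dzbar(2)[OF S C2_on_cR[OF S f]] unfolding C2_on_def by blast+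
  show "dz (cR (\<lambda>w. f w / 2)) z = dz (cR f) z / 2"
    unfolding cR_half by (rule dz_dzbar_divide(1)[OF C1_on_differentiable[OF C1(1) z]])
  have "dz (dzbar (\<lambda>w. cR f w / 2)) z = dz (\<lambda>w. dzbar (cR f) w / 2) z"
    by (rule dz_dzbar_cong(1)[OF S z dz_dzbar_divide(2)[OF C1_on_differentiable[OF C1(1)]]])
  also have "\<dots> = dz (dzbar (cR f)) z / 2"
    by (rule dz_dzbar_divide(1)[OF C1_on_differentiable[OF C1(2) z]])
  finally show "dz (dzbar (cR (\<lambda>w. f w / 2))) z = dz (dzbar (cR f)) z / 2"
    unfolding cR_half .
qed

section \<open>Primitives of closed real 1-forms\<close>

text \<open>If \<open>dF = lin_uv F1 F2\<close>, the real 1-form \<open>Re (F dz)\<close> is closed iff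
  \<open>Im (F1 + \<i> * F2) = 0\<close>, i.e. iff \<open>dzbar F\<close> is real; this is the hypothesis of the
  primitive lemmas below.\<close>

lemma closed_form_symmetric:
  assumes "Im (F1 + \<i> * F2) = 0"
  shows "Re (lin_uv F1 F2 x * k) = Re (lin_uv F1 F2 k * x)"
proof -
  have "Re F2 = - Im F1"
    using assms by simp
  then show ?thesis
    by (simp add: lin_uv_def algebra_simps)
qed

lemma convex_segment_point:
  assumes "convex S" "a \<in> S" "x \<in> S" "t \<in> {0..1}"
  shows "a + of_real t * (x - a) \<in> S"
proof -
  have "a + of_real t * (x - a) = (1 - t) *\<^sub>R a + t *\<^sub>R x"
    by (simp add: scaleR_conv_of_real algebra_simps)
  then show ?thesis
    using assms convexD_alt by fastforce
qed

lemma radial_integrand_has_derivative: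
  fixes F :: "complex \<Rightarrow> complex"
  assumes "(F has_derivative lin_uv A B) (at (a + of_real t * (x - a)))"
  shows "((\<lambda>x. 2 * Re (F (a + of_real t * (x - a)) * (x - a))) has_derivative
      (\<lambda>k. 2 * Re (of_real t * lin_uv A B k * (x - a) + F (a + of_real t * (x - a)) * k))) (at x)"
proof -
  have "((\<lambda>x. a + of_real t * (x - a)) has_derivative (\<lambda>k. of_real t * k)) (at x)"
    by (auto intro!: derivative_eq_intros)
  from has_derivative_mult[OF has_derivative_compose[OF this assms]
      has_derivative_diff[OF has_derivative_ident has_derivative_const]]
  have "((\<lambda>x. F (a + of_real t * (x - a)) * (x - a)) has_derivative
      (\<lambda>k. F (a + of_real t * (x - a)) * (k - 0) + lin_uv A B (of_real t * k) * (x - a))) (at x)" .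
  from has_derivative_mult_right[OF bounded_linear.has_derivative[OF bounded_linear_Re this], of 2]
  show ?thesis
    by (simp only: lin_uv_of_real_mult) (simp add: scaleR_conv_of_real algebra_simps)
qed

lemma radial_integral_has_derivative:
  fixes F :: "complex \<Rightarrow> complex"
  assumes S: "open S" "convex S" "a \<in> S" "x \<in> S"
    and dF: "\<And>z. z \<in> S \<Longrightarrow> (F has_derivative lin_uv (F1 z) (F2 z)) (at z)"
    and cF1: "continuous_on S F1" and cF2: "continuous_on S F2"
  defines "y \<equiv> \<lambda>x t. a + of_real t * (x - a)"
  shows "((\<lambda>x. integral {0..1} (\<lambda>t. 2 * Re (F (y x t) * (x - a)))) has_derivative
      (\<lambda>k. integral {0..1} (\<lambda>t. 2 * Re (of_real t * lin_uv (F1 (y x t)) (F2 (y x t)) k * (x - a)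
                                          + F (y x t) * k)))) (at x)"
proof -
  have yS: "y x t \<in> S" if "x \<in> S" "t \<in> {0..1}" for x t
    unfolding y_def by (rule convex_segment_point[OF S(2,3) that])
  define A1 where "A1 x t = 2 * Re (of_real t * F1 (y x t) * (x - a) + F (y x t))" for x t
  define A2 where "A2 x t = 2 * Re (of_real t * F2 (y x t) * (x - a) + \<i> * F (y x t))" for x t
  define fx where "fx x t = A1 x t *\<^sub>R Blinfun Re + A2 x t *\<^sub>R Blinfun Im" for x t
  have fx_apply: "blinfun_apply (fx x t)
      = (\<lambda>k. 2 * Re (of_real t * lin_uv (F1 (y x t)) (F2 (y x t)) k * (x - a) + F (y x t) * k))" for x t
  proof
    fix k
    have "blinfun_apply (fx x t) k = A1 x t * Re k + A2 x t * Im k"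
      by (simp add: fx_def blinfun.scaleR_left blinfun.add_left bounded_linear_Blinfun_apply
          bounded_linear_Re bounded_linear_Im)
    moreover have "F (y x t) * k = of_real (Re k) * F (y x t) + of_real (Im k) * (\<i> * F (y x t))"
      by (simp add: complex_eq_iff)
    ultimately show "blinfun_apply (fx x t) k
      = 2 * Re (of_real t * lin_uv (F1 (y x t)) (F2 (y x t)) k * (x - a) + F (y x t) * k)"
      by (simp add: A1_def A2_def lin_uv_def algebra_simps)
  qed
  have cF: "continuous_on S F"
    using dF by (meson continuous_at_imp_continuous_on has_derivative_continuous)
  have cy: "continuous_on (S \<times> {0..1}) (\<lambda>(x, t). y x t)"
    unfolding y_def by (simp add: split_beta) (intro continuous_intros)
  have "continuous_on (S \<times> {0..1}) (\<lambda>(x, t). G (y x t))" if "continuous_on S G" for G :: "complex \<Rightarrow> complex"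
    using continuous_on_compose2[OF that cy] yS by (force simp: split_beta)
  from this[OF cF] this[OF cF1] this[OF cF2]
  have "continuous_on (S \<times> {0..1}) (\<lambda>(x, t). A1 x t)" "continuous_on (S \<times> {0..1}) (\<lambda>(x, t). A2 x t)"
    unfolding A1_def A2_def
    by (simp_all add: split_beta) (intro continuous_intros; simp add: split_beta)+
  then have cfx: "continuous_on (S \<times> cbox 0 1) (\<lambda>(x, t). fx x t)"
    unfolding fx_def by (simp add: split_beta interval_cbox[symmetric]) (intro continuous_intros; simp add: split_beta)
  have dfx: "((\<lambda>x. 2 * Re (F (y x t) * (x - a))) has_derivative blinfun_apply (fx x t)) (at x within S)"
    if "x \<in> S" "t \<in> cbox 0 1" for x t
  proof -
    have "(F has_derivative lin_uv (F1 (y x t)) (F2 (y x t))) (at (a + of_real t * (x - a)))"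
      using dF[OF yS] that unfolding y_def by simp
    from radial_integrand_has_derivative[OF this] show ?thesis
      unfolding fx_apply y_def by (rule has_derivative_at_withinI)
  qed
  have intf: "(\<lambda>t. 2 * Re (F (y x t) * (x - a))) integrable_on cbox 0 1" if "x \<in> S" for x
  proof -
    have "continuous_on (cbox 0 1) (\<lambda>t. F (y x t))"
      using continuous_on_compose2[OF cF, of "cbox 0 1" "y x"] yS[OF that]
      unfolding y_def by (force intro: continuous_intros)
    then show ?thesis
      by (intro integrable_continuous continuous_intros)
  qed
  have "continuous_on (cbox 0 1) (fx x)"
    using continuous_on_compose2[OF cfx, of "cbox 0 1" "\<lambda>t. (x, t)"] S(4)
    by (force intro: continuous_intros)
  then have "blinfun_apply (integral (cbox 0 1) (fx x)) = (\<lambda>k. integral (cbox 0 1) (\<lambda>t. fx x t k))"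
    using blinfun_apply_integral[OF integrable_continuous] by blast
  moreover have "((\<lambda>x. integral (cbox 0 1) (\<lambda>t. 2 * Re (F (y x t) * (x - a)))) has_derivative
      blinfun_apply (integral (cbox 0 1) (fx x))) (at x within S)"
    by (rule leibniz_rule[OF dfx intf cfx S(4,2)])
  ultimately show ?thesis
    using at_within_open[OF S(4,1)] by (simp add: fx_apply)
qed

lemma radial_integral_closed_form:
  fixes F :: "complex \<Rightarrow> complex"
  assumes S: "convex S" "a \<in> S" "x \<in> S"
    and dF: "\<And>z. z \<in> S \<Longrightarrow> (F has_derivative lin_uv (F1 z) (F2 z)) (at z)"
    and closed: "\<And>z. z \<in> S \<Longrightarrow> Im (F1 z + \<i> * F2 z) = 0"
  defines "y \<equiv> \<lambda>t. a + of_real t * (x - a)"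
  shows "integral {0..1} (\<lambda>t. 2 * Re (of_real t * lin_uv (F1 (y t)) (F2 (y t)) k * (x - a) + F (y t) * k))
    = 2 * Re (F x * k)"
proof -
  have yS: "y t \<in> S" if "t \<in> {0..1}" for t
    unfolding y_def by (rule convex_segment_point[OF S that])
  define g where "g = (\<lambda>t. t * (2 * Re (F (y t) * k)))"
  have "(g has_real_derivative 2 * Re (of_real t * lin_uv (F1 (y t)) (F2 (y t)) k * (x - a) + F (y t) * k))
      (at t within {0..1})" if t: "t \<in> {0..1}" for t
  proof -
    have "(y has_derivative (\<lambda>s. of_real s * (x - a))) (at t)"
      unfolding y_def by (auto intro!: derivative_eq_intros)
    from has_derivative_compose[OF this dF[OF yS[OF t]]]
    have "((\<lambda>t. F (y t) * k) has_derivative (\<lambda>s. lin_uv (F1 (y t)) (F2 (y t)) (of_real s * (x - a)) * k)) (at t)"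
      by (rule has_derivative_mult_left)
    from has_derivative_mult[OF has_derivative_ident
        has_derivative_mult_right[OF bounded_linear.has_derivative[OF bounded_linear_Re this], of 2]]
    have "(g has_derivative (\<lambda>s. t * (2 * Re (lin_uv (F1 (y t)) (F2 (y t)) (of_real s * (x - a)) * k))
        + s * (2 * Re (F (y t) * k)))) (at t)"
      by (simp only: g_def)
    moreover have "Re (lin_uv (F1 (y t)) (F2 (y t)) (x - a) * k) = Re (lin_uv (F1 (y t)) (F2 (y t)) k * (x - a))"
      by (rule closed_form_symmetric[OF closed[OF yS[OF t]]])
    then have scaled: "Re (lin_uv (F1 (y t)) (F2 (y t)) (of_real s * (x - a)) * k)
        = s * Re (lin_uv (F1 (y t)) (F2 (y t)) k * (x - a))" for s
      by (simp add: lin_uv_of_real_mult)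
    then have "(\<lambda>s. t * (2 * Re (lin_uv (F1 (y t)) (F2 (y t)) (of_real s * (x - a)) * k))
        + s * (2 * Re (F (y t) * k)))
      = (*) (2 * Re (of_real t * lin_uv (F1 (y t)) (F2 (y t)) k * (x - a) + F (y t) * k))"
      by (simp only: fun_eq_iff scaled) (simp add: algebra_simps)
    ultimately show ?thesis
      by (simp add: has_field_derivative_def has_derivative_at_withinI)
  qed
  then have "((\<lambda>t. 2 * Re (of_real t * lin_uv (F1 (y t)) (F2 (y t)) k * (x - a) + F (y t) * k))
      has_integral (g 1 - g 0)) {0..1}"
    by (intro fundamental_theorem_of_calculus) (auto simp: has_real_derivative_iff_has_vector_derivative)
  then show ?thesis
    by (simp add: g_def y_def integral_unique)
qed

lemma closed_form_primitive_convex: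
  fixes F :: "complex \<Rightarrow> complex"
  assumes S: "open S" "convex S" "a \<in> S"
    and dF: "\<And>z. z \<in> S \<Longrightarrow> (F has_derivative lin_uv (F1 z) (F2 z)) (at z)"
    and cF1: "continuous_on S F1" and cF2: "continuous_on S F2"
    and closed: "\<And>z. z \<in> S \<Longrightarrow> Im (F1 z + \<i> * F2 z) = 0"
  shows "\<exists>Q. \<forall>x\<in>S. (Q has_derivative (\<lambda>k. 2 * Re (F x * k))) (at x)"
proof
  show "\<forall>x\<in>S. ((\<lambda>x. integral {0..1} (\<lambda>t. 2 * Re (F (a + of_real t * (x - a)) * (x - a))))
      has_derivative (\<lambda>k. 2 * Re (F x * k))) (at x)"
    using radial_integral_has_derivative[OF S _ dF cF1 cF2] radial_integral_closed_form[OF S(2,3) _ dF closed]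
    by simp
qed

lemma closed_form_pullback:
  fixes F :: "complex \<Rightarrow> complex"
  assumes "\<phi> holomorphic_on B" "open B" "\<phi> ` B \<subseteq> S"
    and dF: "\<And>z. z \<in> S \<Longrightarrow> (F has_derivative lin_uv (F1 z) (F2 z)) (at z)"
    and cF1: "continuous_on S F1" and cF2: "continuous_on S F2"
    and closed: "\<And>z. z \<in> S \<Longrightarrow> Im (F1 z + \<i> * F2 z) = 0"
  shows "\<exists>G1 G2. (\<forall>w\<in>B. ((\<lambda>w. F (\<phi> w) * deriv \<phi> w) has_derivative lin_uv (G1 w) (G2 w)) (at w))
    \<and> continuous_on B G1 \<and> continuous_on B G2 \<and> (\<forall>w\<in>B. Im (G1 w + \<i> * G2 w) = 0)"
proof -
  define L where "L w = lin_uv (F1 (\<phi> w)) (F2 (\<phi> w))" for w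
  define G1 where "G1 w = F (\<phi> w) * deriv (deriv \<phi>) w + L w (deriv \<phi> w) * deriv \<phi> w" for w
  define G2 where "G2 w = F (\<phi> w) * (\<i> * deriv (deriv \<phi>) w) + L w (\<i> * deriv \<phi> w) * deriv \<phi> w" for w
  have h\<phi>': "deriv \<phi> holomorphic_on B"
    by (rule holomorphic_deriv[OF assms(1,2)])
  have "((\<lambda>w. F (\<phi> w) * deriv \<phi> w) has_derivative lin_uv (G1 w) (G2 w)) (at w)" if w: "w \<in> B" for w
  proof -
    have "((\<lambda>w. F (\<phi> w)) has_derivative lin_uv (L w (deriv \<phi> w)) (L w (\<i> * deriv \<phi> w))) (at w)"
      unfolding L_def using assms(3) w
      by (intro has_derivative_lin_uv_compose_holomorphic holomorphic_derivI[OF assms(1,2) w] dF) auto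
    moreover have "(deriv \<phi> has_derivative lin_uv (deriv (deriv \<phi>) w) (\<i> * deriv (deriv \<phi>) w)) (at w)"
      using holomorphic_derivI[OF h\<phi>' assms(2) w] has_field_derivative_iff_lin_uv by blast
    ultimately show ?thesis
      unfolding G1_def G2_def by (rule has_derivative_lin_uv_mult)
  qed
  moreover have "continuous_on B G1 \<and> continuous_on B G2"
  proof -
    have c\<phi>: "continuous_on B \<phi>" "continuous_on B (deriv \<phi>)" "continuous_on B (deriv (deriv \<phi>))"
      using assms(1) h\<phi>' holomorphic_deriv[OF h\<phi>' assms(2)] holomorphic_on_imp_continuous_on by blast+
    have cF: "continuous_on S F"
      using dF by (meson continuous_at_imp_continuous_on has_derivative_continuous)
    have "continuous_on B (\<lambda>w. H (\<phi> w))" if "continuous_on S H" for H :: "complex \<Rightarrow> complex"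
      using continuous_on_compose2[OF that c\<phi>(1) assms(3)] .
    from this[OF cF] this[OF cF1] this[OF cF2] c\<phi> show ?thesis
      unfolding G1_def G2_def L_def lin_uv_def by (auto intro!: continuous_intros)
  qed
  moreover have "Im (G1 w + \<i> * G2 w) = 0" if "w \<in> B" for w
  proof -
    have "G1 w + \<i> * G2 w = (L w (deriv \<phi> w) + \<i> * L w (\<i> * deriv \<phi> w)) * deriv \<phi> w"
      by (simp add: G1_def G2_def algebra_simps)
    also have "\<dots> = deriv \<phi> w * cnj (deriv \<phi> w) * (F1 (\<phi> w) + \<i> * F2 (\<phi> w))"
      by (simp add: L_def lin_uv_add_i_lin_uv)
    finally show ?thesis
      using closed[of "\<phi> w"] assms(3) that by (auto simp: complex_mult_cnj)
  qed
  ultimately show ?thesis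
    by blast
qed

lemma primitive_transport:
  fixes F :: "complex \<Rightarrow> complex"
  assumes "\<psi> holomorphic_on S" "open S" "\<phi> holomorphic_on B" "open B"
    and inverse: "\<And>z. z \<in> S \<Longrightarrow> \<psi> z \<in> B \<and> \<phi> (\<psi> z) = z"
    and Q0: "\<And>w. w \<in> B \<Longrightarrow> (Q0 has_derivative (\<lambda>k. 2 * Re (F (\<phi> w) * deriv \<phi> w * k))) (at w)"
    and z: "z \<in> S"
  shows "((\<lambda>z. Q0 (\<psi> z)) has_derivative (\<lambda>k. 2 * Re (F z * k))) (at z)"
proof -
  have d\<psi>: "(\<psi> has_field_derivative deriv \<psi> z) (at z)"
    using holomorphic_derivI[OF assms(1,2) z] .
  have "((\<lambda>z. \<phi> (\<psi> z)) has_field_derivative deriv \<phi> (\<psi> z) * deriv \<psi> z) (at z)"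
    using DERIV_chain'[OF d\<psi> holomorphic_derivI[OF assms(3,4)]] inverse[OF z] by blast
  moreover have "((\<lambda>z. \<phi> (\<psi> z)) has_field_derivative 1) (at z)"
    by (rule has_field_derivative_transform_within_open[OF DERIV_ident assms(2) z]) (simp add: inverse)
  ultimately have "deriv \<phi> (\<psi> z) * deriv \<psi> z = 1"
    using DERIV_unique by blast
  moreover have "(\<psi> has_derivative (\<lambda>k. deriv \<psi> z * k)) (at z)"
    using d\<psi> by (simp add: has_field_derivative_def)
  from has_derivative_compose[OF this Q0] inverse[OF z]
  have "((\<lambda>z. Q0 (\<psi> z)) has_derivative (\<lambda>k. 2 * Re (F z * (deriv \<phi> (\<psi> z) * deriv \<psi> z) * k))) (at z)"
    by (simp add: mult.assoc)
  ultimately show ?thesis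
    by simp
qed

lemma closed_form_primitive_simply_connected:
  fixes F :: "complex \<Rightarrow> complex"
  assumes S: "open S" "simply_connected S"
    and dF: "\<And>z. z \<in> S \<Longrightarrow> (F has_derivative lin_uv (F1 z) (F2 z)) (at z)"
    and cF1: "continuous_on S F1" and cF2: "continuous_on S F2"
    and closed: "\<And>z. z \<in> S \<Longrightarrow> Im (F1 z + \<i> * F2 z) = 0"
  shows "\<exists>Q. \<forall>z\<in>S. (Q has_derivative (\<lambda>k. 2 * Re (F z * k))) (at z)"
proof -
  consider "S = {}" | "S = UNIV" | "\<exists>\<psi> \<phi>. \<psi> holomorphic_on S \<and> \<phi> holomorphic_on ball 0 1 \<and>
      (\<forall>z\<in>S. \<psi> z \<in> ball 0 1 \<and> \<phi> (\<psi> z) = z) \<and> (\<forall>w\<in>ball 0 1. \<phi> w \<in> S \<and> \<psi> (\<phi> w) = w)"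
    using S simply_connected_eq_biholomorphic_to_disc by blast
  then show ?thesis
  proof cases
    case 1
    then show ?thesis by simp
  next
    case 2
    then show ?thesis
      using closed_form_primitive_convex[of S 0 F F1 F2] dF cF1 cF2 closed by simp
  next
    case 3
    then obtain \<psi> \<phi> where \<psi>: "\<psi> holomorphic_on S" and \<phi>: "\<phi> holomorphic_on ball 0 1"
      and inverse: "\<And>z. z \<in> S \<Longrightarrow> \<psi> z \<in> ball 0 1 \<and> \<phi> (\<psi> z) = z"
      and "\<phi> ` ball 0 1 \<subseteq> S"
      by blast
    then obtain G1 G2 where "\<forall>w\<in>ball 0 1. ((\<lambda>w. F (\<phi> w) * deriv \<phi> w) has_derivative lin_uv (G1 w) (G2 w)) (at w)"
      "continuous_on (ball 0 1) G1" "continuous_on (ball 0 1) G2" "\<forall>w\<in>ball 0 1. Im (G1 w + \<i> * G2 w) = 0"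
      using closed_form_pullback[OF \<phi> open_ball _ dF cF1 cF2 closed] by blast
    then have "\<exists>Q0. \<forall>w\<in>ball 0 1. (Q0 has_derivative (\<lambda>k. 2 * Re (F (\<phi> w) * deriv \<phi> w * k))) (at w)"
      by (intro closed_form_primitive_convex[of "ball 0 1" 0 _ G1 G2]) auto
    then show ?thesis
      using primitive_transport[OF \<psi> S(1) \<phi> open_ball inverse] by blast
  qed
qed

lemma real_primitive:
  fixes F :: "complex \<Rightarrow> complex"
  assumes S: "open S" "simply_connected S"
    and F: "C1_on S F" and real: "\<And>z. z \<in> S \<Longrightarrow> Im (dzbar F z) = 0"
  shows "\<exists>Q. C2_on S Q \<and> (\<forall>z\<in>S. dz (cR Q) z = F z)"
proof -
  have "continuous_on S (pu F)" "continuous_on S (pv F)"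
    using F unfolding C1_on_def by auto
  moreover have "Im (pu F z + \<i> * pv F z) = 0" if "z \<in> S" for z
    using real[OF that] by (simp add: dzbar_def)
  ultimately obtain Q where "\<forall>z\<in>S. (Q has_derivative (\<lambda>k. 2 * Re (F z * k))) (at z)"
    using closed_form_primitive_simply_connected[OF S C1_on_has_derivative[OF F]] by blast
  moreover have "(\<lambda>k. 2 * Re (F z * k)) = lin_uv (2 * Re (F z)) (- 2 * Im (F z))" for z
    by (simp add: fun_eq_iff lin_uv_def algebra_simps)
  ultimately have dQ: "z \<in> S \<Longrightarrow> (Q has_derivative lin_uv (2 * Re (F z)) (- 2 * Im (F z))) (at z)" for z
    by simp
  have reF: "C1_on S (\<lambda>z. 2 * Re (F z))" "C1_on S (\<lambda>z. - 2 * Im (F z))"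
    using C1_on_bounded_linear[OF bounded_linear_compose[OF bounded_linear_mult_right bounded_linear_Re] S(1) F]
      C1_on_bounded_linear[OF bounded_linear_compose[OF bounded_linear_mult_right bounded_linear_Im] S(1) F]
    by blast+
  have "C1_on S Q"
    using C1_onI[OF S(1) dQ] reF[THEN C1_on_imp_continuous_on] by blast
  moreover have "C1_on S (pu Q)" "C1_on S (pv Q)"
    using C1_on_cong[OF S(1) reF(1)] C1_on_cong[OF S(1) reF(2)] pu_pv_eqI[OF dQ] by metis+
  moreover have "dz (cR Q) z = F z" if "z \<in> S" for z
    using pu_pv_eqI[OF dQ[OF that]] pu_pv_cR[OF C1_on_differentiable[OF \<open>C1_on S Q\<close> that]]
    by (simp add: dz_def complex_eq_iff)
  ultimately show ?thesis
    unfolding C2_on_def by blast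
qed

lemma dz_dzbar_real_primitive:
  fixes Q :: "complex \<Rightarrow> real"
  assumes S: "open S" "z \<in> S" and "C1_on S Q" "C1_on S F" "\<forall>w\<in>S. dz (cR Q) w = F w"
  shows "dz (dzbar (cR Q)) z = cnj (dzbar F z)"
proof -
  have "dzbar (cR Q) w = cnj (F w)" if "w \<in> S" for w
    using dzbar_cR[OF C1_on_differentiable[OF assms(3) that]] assms(5) that by simp
  then have "dz (dzbar (cR Q)) z = dz (\<lambda>w. cnj (F w)) z"
    by (rule dz_dzbar_cong(1)[OF S])
  also have "\<dots> = cnj (dzbar F z)"
    by (rule dz_cnj[OF C1_on_differentiable[OF assms(4) S(2)]])
  finally show ?thesis .
qed

section \<open>Weierstrass data\<close>

definition Qz :: "(complex \<Rightarrow> complex) \<Rightarrow> (complex \<Rightarrow> real) \<Rightarrow> (complex \<Rightarrow> real) \<Rightarrow> complex \<Rightarrow> complex" where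
  "Qz h M N z = h z * dz (cR M) z - (h z)\<^sup>2 / 2 * dz (cR N) z"

lemma WD2_holomorphic:
  assumes "open \<Omega>" "WD2 \<Omega> h M N"
  shows "h holomorphic_on \<Omega>"
  using assms(2) holomorphic_onI_dzbar[OF assms(1)] C1_on_differentiable
  unfolding WD2_def C2_on_def by blast

lemma C1_on_Qz:
  assumes \<Omega>: "open \<Omega>" and WD2: "WD2 \<Omega> h M N"
  shows "C1_on \<Omega> (Qz h M N)"
proof -
  have h: "h holomorphic_on \<Omega>" "(\<lambda>z. (h z)\<^sup>2 / 2) holomorphic_on \<Omega>"
    using WD2_holomorphic[OF assms] by (auto intro!: holomorphic_intros)
  have "C1_on \<Omega> (dz (cR M))" "C1_on \<Omega> (dz (cR N))"
    using WD2 C1_on_dz_dzbar(1)[OF \<Omega> C2_on_cR[OF \<Omega>]] unfolding WD2_def by blast+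
  then show ?thesis
    using C1_on_diff[OF \<Omega> C1_on_mult[OF \<Omega>] C1_on_mult[OF \<Omega>]] h[THEN holomorphic_on_imp_C1_on, OF \<Omega>]
    unfolding Qz_def[abs_def] by blast
qed

lemma dzbar_Qz:
  assumes \<Omega>: "open \<Omega>" and WD2: "WD2 \<Omega> h M N" and z: "z \<in> \<Omega>"
  shows "dzbar (Qz h M N) z = of_real ((cmod (h z))\<^sup>2 / 2) * dz (dzbar (cR N)) z"
proof -
  have M: "C2_on \<Omega> M" and N: "C2_on \<Omega> N"
    and hyp: "dz (dzbar (cR M)) z = of_real (Re (h z)) * dz (dzbar (cR N)) z"
    using WD2 z unfolding WD2_def by auto
  have h: "h holomorphic_on \<Omega>" "(\<lambda>z. (h z)\<^sup>2 / 2) holomorphic_on \<Omega>"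
    using WD2_holomorphic[OF \<Omega> WD2] by (auto intro!: holomorphic_intros)
  have C1: "C1_on \<Omega> h" "C1_on \<Omega> (\<lambda>z. (h z)\<^sup>2 / 2)" "C1_on \<Omega> (dz (cR M))" "C1_on \<Omega> (dz (cR N))"
    using h[THEN holomorphic_on_imp_C1_on, OF \<Omega>] C1_on_dz_dzbar(1)[OF \<Omega> C2_on_cR[OF \<Omega>]] M N
    by blast+
  have swap: "dzbar (dz (cR f)) z = dz (dzbar (cR f)) z" if "C2_on \<Omega> f" for f
    by (simp only: dz_dzbar_cR[OF \<Omega> that z])
  have "dzbar (Qz h M N) z
      = dzbar (\<lambda>w. h w * dz (cR M) w) z - dzbar (\<lambda>w. (h w)\<^sup>2 / 2 * dz (cR N) w) z"
    unfolding Qz_def[abs_def] by (intro dzbar_diff C1_on_differentiable[OF C1_on_mult[OF \<Omega>] z] C1)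
  also have "\<dots> = h z * dzbar (dz (cR M)) z - (h z)\<^sup>2 / 2 * dzbar (dz (cR N)) z"
    by (simp only: dzbar_holomorphic_mult[OF h(1) \<Omega> z C1_on_differentiable[OF C1(3) z]]
        dzbar_holomorphic_mult[OF h(2) \<Omega> z C1_on_differentiable[OF C1(4) z]])
  also have "\<dots> = (h z * of_real (Re (h z)) - (h z)\<^sup>2 / 2) * dz (dzbar (cR N)) z"
    unfolding swap[OF M] swap[OF N] hyp by (simp add: algebra_simps)
  also have "h z * of_real (Re (h z)) - (h z)\<^sup>2 / 2 = of_real ((cmod (h z))\<^sup>2 / 2)"
    using cmod_power2[of "h z"] by (simp add: complex_eq_iff power2_eq_square field_simps)
  finally show ?thesis .
qed

lemma second_kind_identity:
  assumes "h \<noteq> 0"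
  shows "1 / cnj (1 / h) * (Nz / 2 - of_real ((cmod (1 / h))\<^sup>2) * (h * Mz - h\<^sup>2 / 2 * Nz))
     = - (Mz - of_real (Re h) * Nz)"
proof -
  have "of_real ((cmod (1 / h))\<^sup>2) = 1 / (h * cnj h)"
    using complex_norm_square[of "1 / h"] by simp
  moreover have "of_real (Re h) = (h + cnj h) / 2"
    using complex_add_cnj[of h] by simp
  ultimately show ?thesis
    using assms by (simp add: field_simps power2_eq_square)
qed

lemma WD1_of_WD2:
  assumes \<Omega>: "open \<Omega>" and WD2: "WD2 \<Omega> h M N"
    and Q: "C2_on \<Omega> Q" "\<forall>z\<in>\<Omega>. dz (cR Q) z = Qz h M N z"
  shows "WD1 \<Omega> (\<lambda>z. 1 / h z) (\<lambda>z. N z / 2) Q"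
    and "\<forall>z\<in>\<Omega>. 1 / cnj (1 / h z) *
           (dz (cR (\<lambda>w. N w / 2)) z - of_real ((cmod (1 / h z))\<^sup>2) * dz (cR Q) z)
         = - (dz (cR M) z - of_real (Re (h z)) * dz (cR N) z)"
proof -
  have N: "C2_on \<Omega> N" and hnz: "\<And>z. z \<in> \<Omega> \<Longrightarrow> h z \<noteq> 0"
    and nondeg: "\<And>z. z \<in> \<Omega> \<Longrightarrow> dz (cR M) z - of_real (Re (h z)) * dz (cR N) z \<noteq> 0"
    using WD2 unfolding WD2_def by auto
  have g: "(\<lambda>z. 1 / h z) holomorphic_on \<Omega>"
    using WD2_holomorphic[OF \<Omega> WD2] hnz by (auto intro!: holomorphic_intros)
  have dz_dzbar_Q: "dz (dzbar (cR Q)) z = of_real ((cmod (h z))\<^sup>2 / 2) * dz (dzbar (cR N)) z"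
    if z: "z \<in> \<Omega>" for z
    using dz_dzbar_real_primitive[OF \<Omega> z _ C1_on_Qz[OF \<Omega> WD2] Q(2)] Q(1)
    unfolding dzbar_Qz[OF \<Omega> WD2 z] dz_dzbar_cR(1)[OF \<Omega> N z] C2_on_def by simp
  show identity: "\<forall>z\<in>\<Omega>. 1 / cnj (1 / h z) *
           (dz (cR (\<lambda>w. N w / 2)) z - of_real ((cmod (1 / h z))\<^sup>2) * dz (cR Q) z)
         = - (dz (cR M) z - of_real (Re (h z)) * dz (cR N) z)"
  proof
    fix z assume z: "z \<in> \<Omega>"
    show "1 / cnj (1 / h z) *
           (dz (cR (\<lambda>w. N w / 2)) z - of_real ((cmod (1 / h z))\<^sup>2) * dz (cR Q) z)
         = - (dz (cR M) z - of_real (Re (h z)) * dz (cR N) z)"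
      unfolding dz_dzbar_cR_half(1)[OF \<Omega> N z] Q(2)[rule_format, OF z] Qz_def
      by (rule second_kind_identity[OF hnz[OF z]])
  qed
  show "WD1 \<Omega> (\<lambda>z. 1 / h z) (\<lambda>z. N z / 2) Q"
    unfolding WD1_def
  proof (intro conjI ballI)
    show "C2_on \<Omega> (\<lambda>z. 1 / h z)"
      by (rule holomorphic_on_imp_C2_on[OF g \<Omega>])
    show "C2_on \<Omega> (\<lambda>z. N z / 2)"
      by (rule C2_on_bounded_linear[OF bounded_linear_divide \<Omega> N])
    show "C2_on \<Omega> Q"
      by (rule Q(1))
    fix z assume z: "z \<in> \<Omega>"
    show "1 / h z \<noteq> 0"
      using hnz[OF z] by simp
    show "dzbar (\<lambda>z. 1 / h z) z = 0"
      by (rule dzbar_holomorphic[OF g \<Omega> z])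
    have "(cmod (1 / h z))\<^sup>2 * ((cmod (h z))\<^sup>2 / 2) = 1 / 2"
      using hnz[OF z] by (simp add: norm_divide power_divide)
    then show "dz (dzbar (cR (\<lambda>z. N z / 2))) z = of_real ((cmod (1 / h z))\<^sup>2) * dz (dzbar (cR Q)) z"
      unfolding dz_dzbar_cR_half(2)[OF \<Omega> N z] dz_dzbar_Q[OF z] mult.assoc[symmetric]
        of_real_mult[symmetric] by simp
    show "dz (cR (\<lambda>z. N z / 2)) z - of_real ((cmod (1 / h z))\<^sup>2) * dz (cR Q) z \<noteq> 0"
    proof
      assume degenerate: "dz (cR (\<lambda>z. N z / 2)) z - of_real ((cmod (1 / h z))\<^sup>2) * dz (cR Q) z = 0"
      have "- (dz (cR M) z - of_real (Re (h z)) * dz (cR N) z) = 0"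
        using identity[rule_format, OF z] unfolding degenerate by simp
      with nondeg[OF z] show False
        by simp
    qed
  qed
qed

theorem mainTheorem2:
  fixes \<Omega> :: "complex set" and h :: "complex \<Rightarrow> complex" and M N :: "complex \<Rightarrow> real"
  assumes "open \<Omega>" and "connected \<Omega>" and "simply_connected \<Omega>"
    and "WD2 \<Omega> h M N"
  shows "(\<exists>Q :: complex \<Rightarrow> real. C2_on \<Omega> Q \<and>
            (\<forall>z\<in>\<Omega>. dz (cR Q) z = h z * dz (cR M) z - (h z)\<^sup>2 / 2 * dz (cR N) z))
       \<and> (\<forall>Q :: complex \<Rightarrow> real. C2_on \<Omega> Q \<and>
            (\<forall>z\<in>\<Omega>. dz (cR Q) z = h z * dz (cR M) z - (h z)\<^sup>2 / 2 * dz (cR N) z) \<longrightarrow>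
            WD1 \<Omega> (\<lambda>z. 1 / h z) (\<lambda>z. N z / 2) Q \<and>
            (\<forall>z\<in>\<Omega>. 1 / cnj (1 / h z) *
                 (dz (cR (\<lambda>w. N w / 2)) z - complex_of_real ((cmod (1 / h z))\<^sup>2) * dz (cR Q) z)
               = - (dz (cR M) z - complex_of_real (Re (h z)) * dz (cR N) z)))"
proof -
  have N: "C2_on \<Omega> N"
    using assms(4) unfolding WD2_def by blast
  have "Im (dzbar (Qz h M N) z) = 0" if "z \<in> \<Omega>" for z
    unfolding dzbar_Qz[OF assms(1,4) that] dz_dzbar_cR(1)[OF assms(1) N that] by simp
  then have "\<exists>Q. C2_on \<Omega> Q \<and> (\<forall>z\<in>\<Omega>. dz (cR Q) z = Qz h M N z)"
    by (rule real_primitive[OF assms(1,3) C1_on_Qz[OF assms(1,4)]])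
  then show ?thesis
    using WD1_of_WD2[OF assms(1,4)] unfolding Qz_def by blast
qed

end
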